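(* In the setting below, assume that $g(x)$ and $l(x)$ are both self-reciprocal. If $\gcd(t_{22}(x),g_{12}(x))\neq 1$, then $C$ is not Euclidean LCD.
   Context: Let $q$ be a prime power, $F=\mathbb{F}_q$, $m\ge1$ with $\gcd(q,m)=1$, and $R=F[x]/\langle x^m-1\rangle$; elements of $R$ are represented by polynomials of degree $<m$ and identified with their coefficient vectors in $F^m$. A quasi-cyclic code of length $2m$ and index $2$ is an $R$-submodule $C\subseteq R^2$. The Euclidean inner product of $(a_1,a_2),(b_1,b_2)\in R^2$ is the sum of the standard dot products of the coefficient vectors of $a_1,b_1$ and of $a_2,b_2$; $C$ is Euclidean LCD if $C\cap C^{\perp_e}=\{0\}$. For a nonzero polynomial $f$ of degree $k$, $f^*(x)=x^kf(x^{-1})$; $f$ is self-reciprocal if $f^*=\alpha f$ for some $\alpha\in F$. Suppose $C$ is generated as an $R$-module by $(g_{11}(x),g_{12}(x))$ and $(0,g_{22}(x))$, where $g_{11},g_{12},g_{22}\in F[x]$ satisfy: $g_{11}\mid x^m-1$, $g_{22}\mid x^m-1$, $\deg g_{12}<\deg g_{22}$, and $g_{11}g_{22}\mid (x^m-1)g_{12}$. Define $g=\gcd(g_{11},g_{22})$, $l=(x^m-1)/\mathrm{lcm}(g_{11},g_{22})$, $g_{22}=g\,g_{22}'$, $r_{22}=\gcd(g_{22}',g_{22}'^* )$, $t_{22}=g_{22}'/r_{22}$. *)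

theory Defs
  imports "HOL-Computational_Algebra.Computational_Algebra" "HOL-Library.Cardinality"
begin

definition xm1 :: "nat \<Rightarrow> 'a::comm_ring_1 poly" where
  "xm1 m = monom 1 m - 1"

text \<open>Elements of R = F[x]/(x^m-1) are polynomials of degree < m.\<close>
definition in_R :: "nat \<Rightarrow> 'a::zero poly \<Rightarrow> bool" where
  "in_R m p \<longleftrightarrow> degree p < m"

definition qc_code :: "nat \<Rightarrow> 'a::field poly \<Rightarrow> 'a poly \<Rightarrow> 'a poly \<Rightarrow> ('a poly \<times> 'a poly) set" where
  "qc_code m g11 g12 g22 =
     {((a * g11) mod xm1 m, (a * g12 + b * g22) mod xm1 m) | a b. True}"

definition eip :: "nat \<Rightarrow> ('a::comm_ring_1 poly \<times> 'a poly) \<Rightarrow> ('a poly \<times> 'a poly) \<Rightarrow> 'a" where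
  "eip m u v = (\<Sum>i<m. coeff (fst u) i * coeff (fst v) i) + (\<Sum>i<m. coeff (snd u) i * coeff (snd v) i)"

definition euclid_dual :: "nat \<Rightarrow> ('a::comm_ring_1 poly \<times> 'a poly) set \<Rightarrow> ('a poly \<times> 'a poly) set" where
  "euclid_dual m C = {v. in_R m (fst v) \<and> in_R m (snd v) \<and> (\<forall>c\<in>C. eip m v c = 0)}"

definition euclidean_LCD :: "nat \<Rightarrow> ('a::comm_ring_1 poly \<times> 'a poly) set \<Rightarrow> bool" where
  "euclidean_LCD m C \<longleftrightarrow> C \<inter> euclid_dual m C = {(0, 0)}"

text \<open>f^* = x^(deg f) f(1/x) is the library's reflect_poly.\<close>
definition self_reciprocal :: "'a::field poly \<Rightarrow> bool" where
  "self_reciprocal f \<longleftrightarrow> f \<noteq> 0 \<and> (\<exists>\<alpha>. reflect_poly f = smult \<alpha> f)"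

end

theory Submission
  imports Defs "HOL-Number_Theory.Residues"
begin

hide_const (open) UnivPoly.coeff UnivPoly.monom Module.smult

text \<open>Since gcd(q, m) = 1, the polynomial x^m - 1 is squarefree. Take a prime p dividing
  both t22 and g12. Squarefreeness keeps p away from g, g11, l and g22'^*, so, since
  x^m - 1 is (up to sign) self-reciprocal and divides l g11 g22, p divides g11^*.
  With h = (x^m - 1)/p the word (h g11, 0) is a nonzero codeword because p divides g12, and
  it is orthogonal to every codeword (a g11, b): the Euclidean product is the coefficient of
  x^(m-1) in h g11 times a shifted reciprocal of a g11, a multiple of h p = x^m - 1 of
  degree below 2m - 1.\<close>

text \<open>For f = g22' this is the paper's t22.\<close>

definition nonreciprocal_part :: "'a::field_gcd poly \<Rightarrow> 'a poly" where
  "nonreciprocal_part f = f div gcd f (reflect_poly f)"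

lemma of_nat_neq_0_if_coprime_CARD:
  assumes "coprime (CARD('a::{field,finite})) m"
  shows "of_nat m \<noteq> (0::'a)"
proof
  assume "of_nat m = (0::'a)"
  then have "CHAR('a) dvd m" by (simp add: of_nat_eq_0_iff_char_dvd)
  with CHAR_dvd_CARD have "is_unit (CHAR('a))"
    using coprime_common_divisor[OF assms] by blast
  then have "CHAR('a) = 1" by simp
  then show False by (metis of_nat_1 of_nat_CHAR zero_neq_one)
qed

lemma coeff_xm1:
  "coeff (xm1 m :: 'a::comm_ring_1 poly) k = (if k = m then 1 else 0) - (if k = 0 then 1 else 0)"
  by (simp add: xm1_def coeff_monom)

lemma degree_xm1:
  assumes "m \<ge> 1"
  shows "degree (xm1 m :: 'a::field poly) = m"
proof -
  have "degree (monom (1::'a) m + (-1)) = m"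
    using assms by (subst degree_add_eq_left) (simp_all add: degree_monom_eq)
  then show ?thesis by (simp add: xm1_def)
qed

lemma xm1_neq_0: "m \<ge> 1 \<Longrightarrow> xm1 m \<noteq> (0::'a::field poly)"
  using degree_xm1[of m, where 'a='a] by auto

lemma reflect_poly_xm1:
  assumes "m \<ge> 1"
  shows "reflect_poly (xm1 m :: 'a::field poly) = - xm1 m"
proof (rule poly_eqI)
  fix n
  show "coeff (reflect_poly (xm1 m :: 'a poly)) n = coeff (- xm1 m) n"
    using assms by (cases "n \<le> m")
      (auto simp: coeff_reflect_poly degree_xm1 coeff_xm1)
qed

lemma squarefree_xm1:
  assumes "of_nat m \<noteq> (0::'a::field)"
  shows "squarefree (xm1 m :: 'a poly)"
proof (rule squarefreeI)
  fix p :: "'a poly"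
  assume "p ^ 2 dvd xm1 m"
  then obtain k where k: "xm1 m = p * p * k" by (auto simp: power2_eq_square elim: dvdE)
  have "pderiv (xm1 m) = p * (2 * pderiv p * k + p * pderiv k)"
    unfolding k by (simp add: pderiv_mult algebra_simps)
  moreover have "pderiv (xm1 m :: 'a poly) = smult (of_nat m) (monom 1 (m - 1))"
    unfolding xm1_def by (simp add: pderiv_diff pderiv_monom smult_monom)
  ultimately have "p dvd smult (of_nat m) (monom 1 (m - 1))" by (metis dvd_triv_left)
  then have "p dvd monom 1 (m - 1)" using assms by (rule dvd_smult_cancel)
  moreover have "monom 1 (m - 1) * monom 1 1 = (monom 1 m :: 'a poly)"
    using assms by (cases m) (auto simp: mult_monom)
  ultimately have "p dvd monom 1 m" by (metis dvd_mult2)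
  moreover have "p dvd xm1 m" using k by simp
  ultimately have "p dvd monom 1 m - xm1 m" by (rule dvd_diff)
  then show "p dvd 1" by (simp add: xm1_def)
qed

lemma squarefree_dvd_both_factors_imp_unit:
  assumes "squarefree X" "a * b dvd X" "p dvd a" "p dvd b"
  shows "is_unit p"
proof -
  have "p ^ 2 dvd a * b" using assms(3,4) by (simp add: power2_eq_square mult_dvd_mono)
  then show ?thesis using assms(1,2) by (meson squarefreeD dvd_trans)
qed

lemma self_reciprocal_dvd_reflect_poly_iff:
  assumes "self_reciprocal f"
  shows "p dvd reflect_poly f \<longleftrightarrow> p dvd f"
proof -
  obtain \<alpha> where "f \<noteq> 0" and \<alpha>: "reflect_poly f = smult \<alpha> f"
    using assms unfolding self_reciprocal_def by blast
  then have "\<alpha> \<noteq> 0" by auto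
  with \<alpha> show ?thesis using dvd_smult dvd_smult_cancel by metis
qed

lemma prime_dvd_reflect_poly_if_xm1_dvd_mult:
  fixes p a b :: "'a::field_gcd poly"
  assumes "m \<ge> 1" "prime p" "p dvd xm1 m" "xm1 m dvd a * b" "\<not> p dvd reflect_poly b"
  shows "p dvd reflect_poly a"
proof -
  have "reflect_poly (xm1 m) dvd reflect_poly a * reflect_poly b"
    using assms(4) by (metis dvdE dvdI reflect_poly_mult)
  moreover have "p dvd reflect_poly (xm1 m :: 'a poly)"
    using assms(1,3) by (simp add: reflect_poly_xm1)
  ultimately show ?thesis
    using assms(2,5) by (meson dvd_trans prime_dvd_mult_iff)
qed

lemma coeff_mult_shifted_reflect_poly:
  fixes u v :: "'a::comm_ring_1 poly"
  assumes "degree v < m"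
  shows "coeff (u * (monom 1 (m - 1 - degree v) * reflect_poly v)) (m - 1)
           = (\<Sum>i<m. coeff u i * coeff v i)"
proof -
  have "{..m - 1} = {..<m}" using assms by auto
  moreover have "coeff (monom 1 (m - 1 - degree v) * reflect_poly v) (m - 1 - i) = coeff v i"
    if "i < m" for i
    using assms that by (auto simp: coeff_monom_mult coeff_reflect_poly coeff_eq_0)
  ultimately show ?thesis by (simp add: coeff_mult)
qed

lemma coeff_pred_eq_0_if_xm1_dvd:
  fixes w :: "'a::field poly"
  assumes "m \<ge> 1" "degree w < 2 * m - 1" "xm1 m dvd w"
  shows "coeff w (m - 1) = 0"
proof -
  obtain Q where Q: "w = xm1 m * Q" using assms(3) by (auto elim: dvdE)
  show ?thesis
  proof (cases "Q = 0")
    case False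
    then have "degree w = m + degree Q"
      using assms(1) by (simp add: Q degree_mult_eq xm1_neq_0 degree_xm1)
    then have "degree Q < m - 1" using assms(2) by linarith
    then show ?thesis
      using assms(1) by (simp add: Q xm1_def left_diff_distrib coeff_monom_mult coeff_eq_0)
  qed (simp add: Q)
qed

lemma dot_coeffs_eq_0_if_xm1_dvd:
  fixes u v :: "'a::field poly"
  assumes "m \<ge> 1" "degree u < m" "degree v < m"
    and "xm1 m dvd u * (monom 1 (m - 1 - degree v) * reflect_poly v)"
  shows "(\<Sum>i<m. coeff u i * coeff v i) = 0"
proof -
  let ?r = "monom 1 (m - 1 - degree v) * reflect_poly v"
  have "degree ?r \<le> (m - 1 - degree v) + degree v"
    using degree_mult_le[of "monom (1::'a) (m - 1 - degree v)" "reflect_poly v"]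
      degree_monom_le[of "1::'a" "m - 1 - degree v"] degree_reflect_poly_le[of v] by linarith
  then have "degree (u * ?r) < 2 * m - 1"
    using assms(2,3) degree_mult_le[of u ?r] by linarith
  with assms show ?thesis
    by (metis coeff_mult_shifted_reflect_poly coeff_pred_eq_0_if_xm1_dvd)
qed

lemma obtain_factor_dvd_reflect_poly_not_dvd:
  fixes g11 g12 g22 :: "'a::field_gcd poly"
  assumes m: "m \<ge> 1" and sq: "squarefree (xm1 m :: 'a poly)"
    and "g11 dvd xm1 m" "g22 dvd xm1 m"
    and g: "self_reciprocal (gcd g11 g22)"
    and l: "self_reciprocal (xm1 m div lcm g11 g22)"
    and "gcd (nonreciprocal_part (g22 div gcd g11 g22)) g12 \<noteq> 1"
  obtains p where "p dvd xm1 m" "p dvd g12" "\<not> p dvd g11" "p dvd reflect_poly g11"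
proof -
  define g where "g = gcd g11 g22"
  define g22' where "g22' = g22 div g"
  define r22 where "r22 = gcd g22' (reflect_poly g22')"
  define l where "l = xm1 m div lcm g11 g22"
  have g22: "g22 = g * g22'" unfolding g22'_def g_def by simp
  have g22': "g22' = r22 * nonreciprocal_part g22'"
    unfolding r22_def nonreciprocal_part_def by simp
  have X: "xm1 m = l * lcm g11 g22" unfolding l_def using assms(3,4) by simp
  have "g22 \<noteq> 0" using assms(4) xm1_neq_0[OF m, where 'a='a] by auto
  then have "gcd (nonreciprocal_part g22') g12 \<noteq> 0" using g22 g22' by auto
  moreover have "\<not> is_unit (gcd (nonreciprocal_part g22') g12)"
    using assms(7) unfolding g22'_def g_def by simp
  ultimately obtain p where p: "prime p" "p dvd gcd (nonreciprocal_part g22') g12"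
    using prime_divisor_exists by blast
  then have p_t22: "p dvd nonreciprocal_part g22'" and "p dvd g12" by simp_all
  have "\<not> is_unit p" using p(1) by (simp add: not_prime_unit)
  then have not_dvd: "\<not> (p dvd a \<and> p dvd b)" if "a * b dvd xm1 m" for a b
    using squarefree_dvd_both_factors_imp_unit[OF sq that] by blast
  have "g22' dvd xm1 m" using g22 assms(4) dvd_triv_right dvd_trans by metis
  have "p dvd g22'" using p_t22 by (subst g22') (rule dvd_mult)
  then have "p dvd g22" by (simp add: g22)
  have "\<not> p dvd g" using not_dvd[of g g22'] g22 assms(4) \<open>p dvd g22'\<close> by simp
  then have "\<not> p dvd g11" using \<open>p dvd g22\<close> unfolding g_def by simp
  have "\<not> p dvd reflect_poly g22'"
  proof
    assume "p dvd reflect_poly g22'"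
    then have "p dvd r22" using \<open>p dvd g22'\<close> unfolding r22_def by simp
    then show False
      using not_dvd[of r22 "nonreciprocal_part g22'"] p_t22 g22' \<open>g22' dvd xm1 m\<close> by simp
  qed
  moreover have "\<not> p dvd reflect_poly g"
    using self_reciprocal_dvd_reflect_poly_iff[OF g[folded g_def]] \<open>\<not> p dvd g\<close> by simp
  moreover have "\<not> p dvd reflect_poly l"
  proof -
    have "p dvd lcm g11 g22" using \<open>p dvd g22\<close> dvd_lcm2 by (rule dvd_trans)
    then have "\<not> p dvd l" using not_dvd[of l "lcm g11 g22"] X by simp
    then show ?thesis using self_reciprocal_dvd_reflect_poly_iff[OF l[folded l_def]] by simp
  qed
  ultimately have "\<not> p dvd reflect_poly (l * g22)"
    using p(1) g22 by (simp add: reflect_poly_mult prime_dvd_mult_iff)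
  moreover have "xm1 m dvd g11 * (l * g22)" using X by (simp add: mult_dvd_mono mult.commute)
  moreover have "p dvd xm1 m" using \<open>p dvd g22\<close> assms(4) by (rule dvd_trans)
  ultimately have "p dvd reflect_poly g11"
    using prime_dvd_reflect_poly_if_xm1_dvd_mult[OF m p(1)] by blast
  then show ?thesis using that \<open>p dvd xm1 m\<close> \<open>p dvd g12\<close> \<open>\<not> p dvd g11\<close> by blast
qed

lemma not_euclidean_LCD_if_dvd_reflect_poly:
  fixes p g11 g12 g22 :: "'a::field poly"
  assumes m: "m \<ge> 1" and "g11 dvd xm1 m" "p dvd xm1 m" "p dvd g12"
    and "\<not> p dvd g11" "p dvd reflect_poly g11"
  shows "\<not> euclidean_LCD m (qc_code m g11 g12 g22)"
proof
  define X where "X = (xm1 m :: 'a poly)"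
  define h where "h = X div p"
  define u where "u = (h * g11) mod X"
  have hp: "X = h * p" unfolding h_def X_def using assms(3) by simp
  have X: "X \<noteq> 0" "degree X = m" unfolding X_def using m by (simp_all add: xm1_neq_0 degree_xm1)
  then have deg_mod: "degree (a mod X) < m" for a
    using degree_mod_less[of X a] m by (cases "a mod X = 0") auto
  have "(u, 0) \<in> qc_code m g11 g12 g22"
  proof -
    have "(h * g12 + 0 * g22) mod X = 0" using assms(4) hp by (auto simp: mult_dvd_mono)
    then have "(u, 0) = ((h * g11) mod X, (h * g12 + 0 * g22) mod X)" unfolding u_def by simp
    then show ?thesis unfolding qc_code_def X_def by blast
  qed
  moreover have "u \<noteq> 0"
  proof
    assume "u = 0"
    then have "h * p dvd h * g11" using hp unfolding u_def by (simp add: mod_eq_0_iff_dvd)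
    then show False using assms(5) X(1) hp by auto
  qed
  moreover have "(u, 0) \<in> euclid_dual m (qc_code m g11 g12 g22)"
    unfolding euclid_dual_def in_R_def
  proof (intro CollectI conjI ballI)
    show "degree (fst (u, 0::'a poly)) < m" "degree (snd (u, 0::'a poly)) < m"
      using deg_mod m unfolding u_def by simp_all
    fix c assume "c \<in> qc_code m g11 g12 g22"
    then obtain a b where c: "c = ((a * g11) mod X, (a * g12 + b * g22) mod X)"
      unfolding qc_code_def X_def by blast
    define v where "v = (a * g11) mod X"
    have "g11 dvd v" unfolding v_def using assms(2) X_def by (simp add: dvd_mod)
    then have "reflect_poly g11 dvd reflect_poly v" by (metis dvdE dvdI reflect_poly_mult)
    then have "p dvd monom 1 (m - 1 - degree v) * reflect_poly v"
      using assms(6) by (meson dvd_trans dvd_mult)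
    moreover have "h dvd u" unfolding u_def using hp by (simp add: dvd_mod)
    ultimately have "X dvd u * (monom 1 (m - 1 - degree v) * reflect_poly v)"
      using hp by (simp add: mult_dvd_mono)
    then have "(\<Sum>i<m. coeff u i * coeff v i) = 0"
      using dot_coeffs_eq_0_if_xm1_dvd[OF m] deg_mod unfolding u_def v_def X_def by blast
    then show "eip m (u, 0) c = 0" unfolding eip_def c v_def by simp
  qed
  moreover assume "euclidean_LCD m (qc_code m g11 g12 g22)"
  ultimately show False unfolding euclidean_LCD_def by blast
qed

theorem lemma3p4:
  fixes m :: nat and g11 g12 g22 :: "'a::{field_gcd, finite} poly"
  assumes "m \<ge> 1"
    and "coprime (CARD('a)) m"
    and "g11 dvd xm1 m" and "g22 dvd xm1 m"
    and "g12 = 0 \<or> degree g12 < degree g22"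
    and "g11 * g22 dvd xm1 m * g12"
    and "self_reciprocal (gcd g11 g22)"  \<comment> \<open>g\<close>
    and "self_reciprocal (xm1 m div lcm g11 g22)"  \<comment> \<open>l\<close>
    and "let g = gcd g11 g22; g22' = g22 div g; r22 = gcd g22' (reflect_poly g22');
             t22 = g22' div r22 in gcd t22 g12 \<noteq> 1"
  shows "\<not> euclidean_LCD m (qc_code m g11 g12 g22)"
proof -
  have "squarefree (xm1 m :: 'a poly)"
    using squarefree_xm1 of_nat_neq_0_if_coprime_CARD[OF assms(2)] by blast
  moreover have "gcd (nonreciprocal_part (g22 div gcd g11 g22)) g12 \<noteq> 1"
    using assms(9) by (simp add: nonreciprocal_part_def Let_def)
  ultimately obtain p where "p dvd xm1 m" "p dvd g12" "\<not> p dvd g11" "p dvd reflect_poly g11"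
    using obtain_factor_dvd_reflect_poly_not_dvd assms(1,3,4,7,8) by blast
  then show ?thesis using not_euclidean_LCD_if_dvd_reflect_poly assms(1,3) by blast
qed

end
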